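(* For every $\mu\in\mathcal{M}^+_0$, $$\frac14\int_0^{2\pi}\!\!\int_0^{2\pi}\sin|\theta-\alpha|\,d\mu(\theta)\,d\mu(\alpha) \;=\; \pi\sum_{n\in\mathbb{Z},\,n\neq\pm1}\frac{|\hat\mu(n)|^2}{1-n^2},$$ where $\hat\mu(n)=\frac{1}{2\pi}\int_{\mathbb{S}^1}e^{-in\theta}d\mu(\theta)$. Equivalently, writing $c_n=\int_{\mathbb{S}^1}e^{-in\theta}d\mu(\theta)$, the left-hand side equals $\frac{1}{4\pi}\sum_{n\neq\pm1}\frac{|c_n|^2}{1-n^2}$.
   Context: $\mathbb{S}^1$ is identified with $[0,2\pi)$. $\mathcal{M}^+_0$ is the set of positive finite Radon measures $\mu$ on $\mathbb{S}^1$ with $\int_{\mathbb{S}^1}e^{i\theta}d\mu(\theta)=0$. The left-hand side is the quantity $A_{max}(\mu)$, which for measures not supported on a pair of antipodal points equals the maximal signed area among closed Lipschitz curves with length measure $\mu$. *)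

theory Defs
  imports "HOL-Analysis.Analysis"
begin

text \<open>The circle S^1 identified with [0, 2 pi).\<close>
definition S1 :: "real set" where
  "S1 = {0..<2*pi}"

text \<open>M_0^+: positive finite (Radon = finite Borel, S^1 compact metric) measures on S^1
  with vanishing first moment.\<close>
definition M0plus :: "real measure set" where
  "M0plus = {\<mu>. sets \<mu> = sets (restrict_space borel S1) \<and> finite_measure \<mu> \<and>
               (\<integral>\<theta>. exp (\<i> * complex_of_real \<theta>) \<partial>\<mu>) = 0}"

definition fourier_coeff :: "real measure \<Rightarrow> int \<Rightarrow> complex" where
  "fourier_coeff \<mu> n = complex_of_real (1 / (2*pi)) *
      (\<integral>\<theta>. exp (- \<i> * of_int n * complex_of_real \<theta>) \<partial>\<mu>)"

end

theory Submission
  imports Defs "HOL-Real_Asymp.Real_Asymp"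
begin

text \<open>
  For \<open>\<bar>y\<bar> \<le> 2\<pi>\<close> the kernel has the cosine expansion
  \<open>sin \<bar>y\<bar> = 1/\<pi> - (2/\<pi>) \<Sum>\<^sub>n\<^sub>\<ge>\<^sub>2 cos (n y) / (n\<^sup>2 - 1) + cos y / (2\<pi>) + y sin y / \<pi>\<close>.
  The series is the real part of \<open>\<Sum>\<^sub>n\<^sub>\<ge>\<^sub>2 z\<^sup>n / (n\<^sup>2 - 1)\<close>, which partial fractions express
  through \<open>Ln (1 - z)\<close> in the open unit disc; since it converges absolutely on the closed
  disc, the formula persists on the unit circle, where \<open>Im (Ln (1 - e\<^sup>i\<^sup>x)) = (x - \<pi>)/2\<close>.
  Integrating the expansion of \<open>sin \<bar>\<theta> - \<alpha>\<bar>\<close> against \<open>\<mu> \<otimes> \<mu>\<close>, the mode \<open>cos (n (\<theta> - \<alpha>))\<close>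
  contributes \<open>C\<^sub>n\<^sup>2 + S\<^sub>n\<^sup>2 = 4\<pi>\<^sup>2 \<bar>fourier_coeff \<mu> n\<bar>\<^sup>2\<close> (with \<open>C\<^sub>n, S\<^sub>n\<close> the cosine and sine moments),
  while the last two terms integrate to zero because \<open>C\<^sub>1 = S\<^sub>1 = 0\<close>.  Each \<open>n \<ge> 2\<close>
  then accounts for the two indices \<open>\<plusminus>n\<close>, and the index \<open>0\<close> gives the squared total mass.
\<close>

definition sq_minus_one :: "nat \<Rightarrow> real" where
  "sq_minus_one m = real ((m + 1) * (m + 3))"

lemma sq_minus_one_eq: "sq_minus_one m = (real m + 2)^2 - 1"
  by (simp add: sq_minus_one_def algebra_simps power2_eq_square)

lemma sq_minus_one_pos: "sq_minus_one m > 0"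
  unfolding sq_minus_one_def by (simp only: of_nat_0_less_iff) simp

lemma sq_minus_one_neq_zero [simp]: "sq_minus_one m \<noteq> 0"
  using sq_minus_one_pos[of m] by simp

lemma half_diff_inverse_shift:
  fixes a :: "'a::field_char_0"
  assumes "a + 1 \<noteq> 0" "a + 3 \<noteq> 0"
  shows "(1 / (a + 1) - 1 / (a + 3)) / 2 = 1 / ((a + 1) * (a + 3))"
  using assms by (simp add: divide_simps)

lemma sums_inverse_sq_minus_one: "(\<lambda>m. 1 / sq_minus_one m) sums (3/4)"
proof -
  define g where "g m = (1 / real (m + 1) + 1 / real (m + 2)) / 2" for m
  have "g \<longlonglongrightarrow> 0"
    unfolding g_def by real_asymp
  then have "(\<lambda>m. g m - g (Suc m)) sums (g 0)"
    using telescope_sums'[of g 0] by simp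
  moreover have "g m - g (Suc m) = 1 / sq_minus_one m" for m
  proof -
    have "g m - g (Suc m) = (1 / (real m + 1) - 1 / (real m + 3)) / 2"
      by (simp add: g_def diff_divide_distrib[symmetric] algebra_simps)
    also have "\<dots> = 1 / sq_minus_one m"
      by (subst half_diff_inverse_shift) (simp_all add: sq_minus_one_def algebra_simps)
    finally show ?thesis .
  qed
  ultimately show ?thesis
    by (simp add: g_def)
qed

lemma summable_div_sq_minus_one: "summable (\<lambda>m. c / sq_minus_one m)"
  using summable_mult[OF sums_summable[OF sums_inverse_sq_minus_one], of c] by simp

lemma sums_neg_Ln_one_minus:
  fixes z :: complex
  assumes "norm z < 1"
  shows "(\<lambda>n. z ^ Suc n / of_nat (Suc n)) sums (- Ln (1 - z))"
proof -
  have "(\<lambda>n. z ^ n / of_nat n) sums (- Ln (1 - z))"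
    using sums_minus[OF Ln_series'[of "-z"]] assms by simp
  then show ?thesis
    by (subst sums_Suc_iff) simp
qed

lemma sums_power_div_sq_minus_one:
  fixes z :: complex
  assumes "norm z < 1" "z \<noteq> 0"
  shows "(\<lambda>m. z ^ (m + 2) / of_real (sq_minus_one m)) sums (((1/z - z) * Ln (1 - z) + 1 + z/2) / 2)"
proof -
  define L where "L = - Ln (1 - z)"
  have L1: "(\<lambda>m. z ^ Suc m / of_nat (Suc m)) sums L"
    unfolding L_def using assms(1) by (rule sums_neg_Ln_one_minus)
  have L3: "(\<lambda>m. z ^ Suc (Suc (Suc m)) / of_nat (Suc (Suc (Suc m)))) sums (L - z - z^2/2)"
    using L1 by (subst sums_Suc_iff, subst sums_Suc_iff) (simp add: numeral_2_eq_2)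
  have "(\<lambda>m. (z * (z ^ Suc m / of_nat (Suc m))
            - (1/z) * (z ^ Suc (Suc (Suc m)) / of_nat (Suc (Suc (Suc m))))) / 2)
        sums ((z * L - (1/z) * (L - z - z^2/2)) / 2)"
    by (intro sums_divide sums_diff sums_mult L1 L3)
  moreover have term_eq: "(z * (z ^ Suc m / of_nat (Suc m))
            - (1/z) * (z ^ Suc (Suc (Suc m)) / of_nat (Suc (Suc (Suc m))))) / 2
          = z ^ (m + 2) / of_real (sq_minus_one m)" for m
  proof -
    have "z * (z ^ Suc m / of_nat (Suc m)) - (1/z) * (z ^ Suc (Suc (Suc m)) / of_nat (Suc (Suc (Suc m))))
        = z ^ (m + 2) * (1 / (of_nat m + 1) - 1 / (of_nat m + 3))"
      using assms(2) by (simp add: algebra_simps power2_eq_square)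
    moreover have "1 / (of_nat m + 1) - 1 / (of_nat m + 3) = 2 / (of_real (sq_minus_one m) :: complex)"
    proof -
      have "(of_nat m + 1 :: complex) \<noteq> 0" "(of_nat m + 3 :: complex) \<noteq> 0"
        using of_nat_eq_0_iff[of "m + 1", where 'a=complex] of_nat_eq_0_iff[of "m + 3", where 'a=complex]
        by (simp_all add: add.commute)
      from half_diff_inverse_shift[OF this] show ?thesis
        by (simp add: sq_minus_one_def algebra_simps)
    qed
    ultimately show ?thesis
      by simp
  qed
  moreover have "(z * L - (1/z) * (L - z - z^2/2)) / 2 = ((1/z - z) * Ln (1 - z) + 1 + z/2) / 2"
    using assms(2) by (simp add: L_def field_simps power2_eq_square)
  ultimately show ?thesis
    by (simp only: term_eq)
qed

lemma continuous_on_suminf_bounded: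
  fixes f :: "nat \<Rightarrow> 'a::topological_space \<Rightarrow> 'b::banach"
  assumes "\<And>n. continuous_on S (f n)" and "\<And>n x. x \<in> S \<Longrightarrow> norm (f n x) \<le> M n"
    and "summable M"
  shows "continuous_on S (\<lambda>x. \<Sum>n. f n x)"
proof (rule uniform_limit_theorem[OF _ Weierstrass_m_test[OF assms(2,3)]])
  show "\<forall>\<^sub>F n in sequentially. continuous_on S (\<lambda>x. \<Sum>i<n. f i x)"
    by (intro always_eventually allI continuous_on_sum assms(1))
qed auto

lemma norm_power_div_sq_minus_one_le:
  fixes z :: complex
  assumes "norm z \<le> 1"
  shows "norm (z ^ (m + 2) / of_real (sq_minus_one m)) \<le> 1 / sq_minus_one m"
  using assms sq_minus_one_pos[of m] power_le_one[of "norm z" "m + 2"]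
  by (simp add: norm_mult norm_power norm_divide divide_right_mono)

lemma continuous_on_cball_power_div_sq_minus_one:
  "continuous_on (cball 0 1) (\<lambda>z::complex. \<Sum>m. z ^ (m + 2) / of_real (sq_minus_one m))"
  using norm_power_div_sq_minus_one_le summable_div_sq_minus_one[of 1]
  by (intro continuous_on_suminf_bounded continuous_intros) auto

lemma Re_of_real_mult_less_one:
  fixes w :: complex
  assumes "norm w = 1" "w \<noteq> 1" "0 \<le> r" "r \<le> 1"
  shows "Re (of_real r * w) < 1"
proof -
  have "Re w \<noteq> 1"
  proof
    assume "Re w = 1"
    moreover from this have "Im w = 0"
      using assms(1) unfolding cmod_def by simp
    ultimately show False
      using assms(2) by (simp add: complex_eq_iff)
  qed
  with complex_Re_le_cmod[of w] assms(1) have "Re w < 1"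
    by simp
  then show ?thesis
    using assms(3,4) mult_left_le_one_le[of "Re w" r] mult_nonneg_nonpos[of r "Re w"]
    by (cases "Re w \<ge> 0") auto
qed

text \<open>Abel's argument: both sides are continuous along the radius \<open>r \<mapsto> r w\<close> up to \<open>r = 1\<close>.\<close>

lemma sums_power_div_sq_minus_one_circle:
  fixes w :: complex
  assumes "norm w = 1" "w \<noteq> 1"
  shows "(\<lambda>m. w ^ (m + 2) / of_real (sq_minus_one m)) sums (((1/w - w) * Ln (1 - w) + 1 + w/2) / 2)"
proof -
  define S where "S z = (\<Sum>m. z ^ (m + 2) / of_real (sq_minus_one m))" for z :: complex
  define G where "G z = ((1/z - z) * Ln (1 - z) + 1 + z/2) / 2" for z :: complex
  have "continuous_on {0..1} (\<lambda>r. S (of_real r * w))"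
    unfolding S_def using assms(1)
    by (intro continuous_on_compose2[OF continuous_on_cball_power_div_sq_minus_one] continuous_intros)
      (auto simp: norm_mult)
  from continuous_on_Icc_at_leftD[OF this] have S_lim: "((\<lambda>r. S (of_real r * w)) \<longlongrightarrow> S w) (at_left 1)"
    by simp
  have "1 - of_real r * w \<notin> \<real>\<^sub>\<le>\<^sub>0" "of_real r * w \<noteq> 0" if "r \<in> {1/2..1}" for r
    using that assms Re_of_real_mult_less_one[OF assms, of r] by (auto simp: complex_nonpos_Reals_iff)
  then have "continuous_on {1/2..1} (\<lambda>r. G (of_real r * w))"
    unfolding G_def by (intro continuous_intros) auto
  from continuous_on_Icc_at_leftD[OF this] have "((\<lambda>r. G (of_real r * w)) \<longlongrightarrow> G w) (at_left 1)"
    by simp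
  moreover have "eventually (\<lambda>r. S (of_real r * w) = G (of_real r * w)) (at_left (1::real))"
  proof (rule eventually_mono[OF eventually_at_left_real[of "1/2"]])
    fix r :: real
    assume "r \<in> {1/2<..<1}"
    then have "norm (of_real r * w) < 1" "of_real r * w \<noteq> 0"
      using assms(1) by (auto simp: norm_mult)
    from sums_power_div_sq_minus_one[OF this] show "S (of_real r * w) = G (of_real r * w)"
      unfolding S_def G_def by (simp add: sums_iff)
  qed simp
  ultimately have G_lim: "((\<lambda>r. S (of_real r * w)) \<longlongrightarrow> G w) (at_left 1)"
    by (simp add: tendsto_cong)
  have "summable (\<lambda>m. w ^ (m + 2) / of_real (sq_minus_one m))"
    using norm_power_div_sq_minus_one_le[of w] assms(1)
    by (intro summable_comparison_test'[OF summable_div_sq_minus_one[of 1]]) simp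
  then have "(\<lambda>m. w ^ (m + 2) / of_real (sq_minus_one m)) sums S w"
    unfolding S_def by (simp add: summable_sums)
  also have "S w = G w"
    by (rule tendsto_unique[OF trivial_limit_at_left_real S_lim G_lim])
  finally show ?thesis
    by (simp add: G_def)
qed

lemma cos_less_one:
  assumes "0 < x" "x < 2 * pi"
  shows "cos x < 1"
proof -
  have "sin (x / 2) > 0"
    using assms by (intro sin_gt_zero) auto
  then show ?thesis
    using cos_double_sin[of "x / 2"] by simp
qed

lemma one_minus_cis_eq_rcis:
  "1 - cis x = rcis (2 * sin (x / 2)) ((x - pi) / 2)"
proof -
  have "cos x = 1 - 2 * sin (x / 2) ^ 2" "sin x = 2 * sin (x / 2) * cos (x / 2)"
    using cos_double_sin[of "x / 2"] sin_double[of "x / 2"] by simp_all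
  moreover have "cos ((x - pi) / 2) = sin (x / 2)" "sin ((x - pi) / 2) = - cos (x / 2)"
    by (simp_all add: cos_diff sin_diff diff_divide_distrib)
  ultimately show ?thesis
    by (simp add: complex_eq_iff rcis_def power2_eq_square)
qed

lemma Im_Ln_one_minus_cis:
  assumes "0 < x" "x < 2 * pi"
  shows "Im (Ln (1 - cis x)) = (x - pi) / 2"
proof -
  have "sin (x / 2) > 0"
    using assms by (intro sin_gt_zero) auto
  with assms show ?thesis
    unfolding one_minus_cis_eq_rcis by (simp add: Ln_rcis)
qed

lemma sums_cos_div_sq_minus_one:
  assumes "0 \<le> x" "x \<le> 2 * pi"
  shows "(\<lambda>m. cos (real (m + 2) * x) / sq_minus_one m) sums (1/2 + cos x / 4 - (pi - x) * sin x / 2)"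
proof (cases "x = 0 \<or> x = 2 * pi")
  case True
  then have "cos (real (m + 2) * x) = 1" for m
    using cos_int_2pin[of "int (m + 2)"] by (auto simp: mult_ac)
  with True show ?thesis
    using sums_inverse_sq_minus_one by auto
next
  case False
  with assms have x: "0 < x" "x < 2 * pi"
    by auto
  have "cis x \<noteq> 1"
    using cos_less_one[OF x] by (auto simp: complex_eq_iff)
  have term_eq: "Re (cis x ^ (m + 2) / of_real (sq_minus_one m)) = cos (real (m + 2) * x) / sq_minus_one m"
    for m by (simp only: Complex.DeMoivre Re_divide_of_real cis.sel)
  have "1 / cis x - cis x = - \<i> * of_real (2 * sin x)"
    by (simp add: complex_eq_iff divide_inverse del: cis_inverse)
  then have "Re (((1 / cis x - cis x) * Ln (1 - cis x) + 1 + cis x / 2) / 2)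
      = (2 * sin x * Im (Ln (1 - cis x)) + 1 + cos x / 2) / 2"
    by simp
  also have "\<dots> = 1/2 + cos x / 4 - (pi - x) * sin x / 2"
    unfolding Im_Ln_one_minus_cis[OF x] by (simp add: field_simps)
  finally have value_eq: "Re (((1 / cis x - cis x) * Ln (1 - cis x) + 1 + cis x / 2) / 2)
      = 1/2 + cos x / 4 - (pi - x) * sin x / 2" .
  from sums_Re[OF sums_power_div_sq_minus_one_circle[OF norm_cis \<open>cis x \<noteq> 1\<close>]]
  show ?thesis
    unfolding term_eq value_eq .
qed

lemma sin_abs_eq_cos_series:
  assumes "\<bar>y\<bar> \<le> 2 * pi"
  shows "sin \<bar>y\<bar> = 1/pi - (2/pi) * (\<Sum>m. cos (real (m + 2) * y) / sq_minus_one m)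
      + cos y / (2 * pi) + y * sin y / pi"
proof -
  have cos_abs: "cos (c * \<bar>y\<bar>) = cos (c * y)" for c
    by (cases "y \<ge> 0") simp_all
  have "(\<Sum>m. cos (real (m + 2) * y) / sq_minus_one m) = 1/2 + cos y / 4 - (pi - \<bar>y\<bar>) * sin \<bar>y\<bar> / 2"
    using sums_cos_div_sq_minus_one[of "\<bar>y\<bar>"] assms cos_abs[of 1] by (simp add: sums_iff cos_abs)
  moreover have "\<bar>y\<bar> * sin \<bar>y\<bar> = y * sin y"
    by (cases "y \<ge> 0") simp_all
  ultimately show ?thesis
    by (simp add: field_simps)
qed

locale circle_measure = finite_measure \<mu> for \<mu> :: "real measure" +
  assumes sets_circle: "sets \<mu> = sets (restrict_space borel S1)"
begin

abbreviation total_mass :: real where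
  "total_mass \<equiv> measure \<mu> S1"

lemma space_circle: "space \<mu> = S1"
  using sets_eq_imp_space_eq[OF sets_circle] by (simp add: space_restrict_space)

lemma integrable_bounded_on_circle:
  fixes f :: "real \<Rightarrow> 'b::{banach,second_countable_topology}"
  assumes "f \<in> borel_measurable borel" and "\<And>x. x \<in> S1 \<Longrightarrow> norm (f x) \<le> B"
  shows "integrable \<mu> f"
proof -
  have "f \<in> borel_measurable \<mu>"
    using measurable_restrict_space1[OF assms(1)] measurable_cong_sets[OF sets_circle refl] by blast
  then show ?thesis
    using assms(2) by (intro integrable_const_bound[of _ B]) (auto simp: space_circle)
qed

lemma integrable_continuous:
  fixes f :: "real \<Rightarrow> 'b::{banach,second_countable_topology}"
  assumes "continuous_on UNIV f"
  shows "integrable \<mu> f"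
proof -
  have "compact (f ` {0..2*pi})"
    by (intro compact_continuous_image continuous_on_subset[OF assms]) auto
  then obtain B where "\<And>x. x \<in> {0..2*pi} \<Longrightarrow> norm (f x) \<le> B"
    by (meson bounded_iff compact_imp_bounded image_eqI)
  then show ?thesis
    by (intro integrable_bounded_on_circle[OF borel_measurable_continuous_onI[OF assms], of B])
      (auto simp: S1_def)
qed

lemma abs_integral_le_total_mass:
  fixes f :: "real \<Rightarrow> real"
  assumes "f \<in> borel_measurable borel" and "\<And>x. x \<in> S1 \<Longrightarrow> \<bar>f x\<bar> \<le> B"
  shows "\<bar>\<integral>x. f x \<partial>\<mu>\<bar> \<le> total_mass * B"
proof -
  have "0 \<le> B"
    using assms(2)[of 0] by (simp add: S1_def)
  have "\<bar>\<integral>x. f x \<partial>\<mu>\<bar> \<le> (\<integral>x. \<bar>f x\<bar> \<partial>\<mu>)"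
    by (rule integral_abs_bound)
  also have "\<dots> \<le> (\<integral>x. B \<partial>\<mu>)"
    using assms \<open>0 \<le> B\<close>
    by (intro integral_mono integrable_bounded_on_circle[of _ B]) (auto simp: space_circle)
  finally show ?thesis
    by (simp add: space_circle)
qed

lemma
  fixes f :: "nat \<Rightarrow> real \<Rightarrow> real"
  assumes "\<And>i. f i \<in> borel_measurable borel"
    and "\<And>i x. x \<in> S1 \<Longrightarrow> \<bar>f i x\<bar> \<le> b i" and "summable b"
  shows integrable_suminf_bounded: "integrable \<mu> (\<lambda>x. \<Sum>i. f i x)"
    and sums_integral_bounded: "(\<lambda>i. \<integral>x. f i x \<partial>\<mu>) sums (\<integral>x. (\<Sum>i. f i x) \<partial>\<mu>)"
proof -
  have "integrable \<mu> (f i)" for i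
    using assms(1,2) by (intro integrable_bounded_on_circle[of _ "b i"]) auto
  moreover have "AE x in \<mu>. summable (\<lambda>i. norm (f i x))"
  proof (rule AE_I2)
    fix x
    assume "x \<in> space \<mu>"
    then show "summable (\<lambda>i. norm (f i x))"
      using assms(2) by (intro summable_comparison_test'[OF assms(3)]) (simp add: space_circle)
  qed
  moreover have "\<bar>\<integral>x. \<bar>f i x\<bar> \<partial>\<mu>\<bar> \<le> total_mass * b i" for i
    using assms(2) by (intro abs_integral_le_total_mass borel_measurable_abs assms(1)) simp
  then have "summable (\<lambda>i. \<integral>x. norm (f i x) \<partial>\<mu>)"
    by (intro summable_comparison_test'[OF summable_mult[OF assms(3), of total_mass]]) simp
  ultimately show "integrable \<mu> (\<lambda>x. \<Sum>i. f i x)"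
    and "(\<lambda>i. \<integral>x. f i x \<partial>\<mu>) sums (\<integral>x. (\<Sum>i. f i x) \<partial>\<mu>)"
    by (rule integrable_suminf, rule sums_integral)
qed

definition cos_moment :: "real \<Rightarrow> real" where
  "cos_moment k = (\<integral>\<theta>. cos (k * \<theta>) \<partial>\<mu>)"

definition sin_moment :: "real \<Rightarrow> real" where
  "sin_moment k = (\<integral>\<theta>. sin (k * \<theta>) \<partial>\<mu>)"

lemma cos_moment_uminus: "cos_moment (- k) = cos_moment k"
  and sin_moment_uminus: "sin_moment (- k) = - sin_moment k"
  by (simp_all add: cos_moment_def sin_moment_def)

lemma cos_moment_0: "cos_moment 0 = total_mass"
  and sin_moment_0: "sin_moment 0 = 0"
  by (simp_all add: cos_moment_def sin_moment_def space_circle)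

lemma abs_cos_moment_le: "\<bar>cos_moment k\<bar> \<le> total_mass"
  and abs_sin_moment_le: "\<bar>sin_moment k\<bar> \<le> total_mass"
  using abs_integral_le_total_mass[of "\<lambda>\<theta>. cos (k * \<theta>)" 1]
    abs_integral_le_total_mass[of "\<lambda>\<theta>. sin (k * \<theta>)" 1]
  by (auto simp: cos_moment_def sin_moment_def intro!: borel_measurable_continuous_onI continuous_intros)

lemma integral_cis_mult: "(\<integral>\<theta>. cis (k * \<theta>) \<partial>\<mu>) = Complex (cos_moment k) (sin_moment k)"
proof -
  have "integrable \<mu> (\<lambda>\<theta>. cis (k * \<theta>))"
    by (intro integrable_continuous continuous_intros)
  then show ?thesis
    by (simp add: complex_eq_iff cos_moment_def sin_moment_def flip: integral_Re integral_Im)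
qed

lemma norm_fourier_coeff_sq:
  "(cmod (fourier_coeff \<mu> n))^2 = (cos_moment n ^ 2 + sin_moment n ^ 2) / (4 * pi^2)"
proof -
  have "fourier_coeff \<mu> n = of_real (1 / (2*pi)) * (\<integral>\<theta>. cis (- of_int n * \<theta>) \<partial>\<mu>)"
    by (simp add: fourier_coeff_def cis_conv_exp mult.assoc)
  also have "\<dots> = of_real (1 / (2*pi)) * Complex (cos_moment n) (- sin_moment n)"
    unfolding integral_cis_mult cos_moment_uminus sin_moment_uminus ..
  finally show ?thesis
    by (simp add: norm_mult cmod_power2 power_divide power_mult_distrib add_divide_distrib)
qed

lemma abs_cos_sin_moment_le:
  "\<bar>cos (k * \<theta>) * cos_moment k + sin (k * \<theta>) * sin_moment k\<bar> \<le> 2 * total_mass"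
proof -
  have "\<bar>cos (k * \<theta>) * cos_moment k\<bar> \<le> total_mass" "\<bar>sin (k * \<theta>) * sin_moment k\<bar> \<le> total_mass"
    using mult_mono[OF abs_cos_le_one abs_cos_moment_le] mult_mono[OF abs_sin_le_one abs_sin_moment_le]
    by (simp_all add: abs_mult)
  then show ?thesis
    by linarith
qed

lemma integral_cos_sin_moment:
  "(\<integral>\<theta>. cos (k * \<theta>) * cos_moment k + sin (k * \<theta>) * sin_moment k \<partial>\<mu>) = cos_moment k ^ 2 + sin_moment k ^ 2"
proof -
  have "integrable \<mu> (\<lambda>\<theta>. cos (k * \<theta>))" "integrable \<mu> (\<lambda>\<theta>. sin (k * \<theta>))"
    by (intro integrable_continuous continuous_intros)+
  then show ?thesis
    by (simp add: cos_moment_def sin_moment_def power2_eq_square)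
qed

definition mode_series :: "real \<Rightarrow> real" where
  "mode_series \<theta> = (\<Sum>m. (cos (real (m + 2) * \<theta>) * cos_moment (real (m + 2))
      + sin (real (m + 2) * \<theta>) * sin_moment (real (m + 2))) / sq_minus_one m)"

lemma integrable_mode_series: "integrable \<mu> mode_series"
  and sums_integral_mode_series:
    "(\<lambda>m. (cos_moment (real (m + 2))^2 + sin_moment (real (m + 2))^2) / sq_minus_one m)
       sums (\<integral>\<theta>. mode_series \<theta> \<partial>\<mu>)"
proof -
  define h where "h m \<theta> = (cos (real (m + 2) * \<theta>) * cos_moment (real (m + 2))
      + sin (real (m + 2) * \<theta>) * sin_moment (real (m + 2))) / sq_minus_one m" for m \<theta>
  have h_meas: "h m \<in> borel_measurable borel" for m
    unfolding h_def by (intro borel_measurable_continuous_onI continuous_intros) simp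
  have h_bound: "\<bar>h m \<theta>\<bar> \<le> 2 * total_mass / sq_minus_one m" for m \<theta>
    unfolding h_def using abs_cos_sin_moment_le sq_minus_one_pos[of m]
    by (simp add: abs_div divide_right_mono)
  note h_summable = summable_div_sq_minus_one[of "2 * total_mass"]
  have mode_series_eq: "mode_series = (\<lambda>\<theta>. \<Sum>m. h m \<theta>)"
    by (simp add: fun_eq_iff mode_series_def h_def)
  show "integrable \<mu> mode_series"
    unfolding mode_series_eq by (rule integrable_suminf_bounded[OF h_meas h_bound h_summable])
  have "(\<integral>\<theta>. h m \<theta> \<partial>\<mu>) = (cos_moment (real (m + 2))^2 + sin_moment (real (m + 2))^2) / sq_minus_one m"
    for m unfolding h_def integral_divide_zero integral_cos_sin_moment ..
  with sums_integral_bounded[OF h_meas h_bound h_summable]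
  show "(\<lambda>m. (cos_moment (real (m + 2))^2 + sin_moment (real (m + 2))^2) / sq_minus_one m)
      sums (\<integral>\<theta>. mode_series \<theta> \<partial>\<mu>)"
    unfolding mode_series_eq by simp
qed

definition fourier_term :: "int \<Rightarrow> real" where
  "fourier_term n = pi * (cmod (fourier_coeff \<mu> n))^2 / (1 - (real_of_int n)^2)"

lemma fourier_term_eq:
  "fourier_term n = (cos_moment n ^ 2 + sin_moment n ^ 2) / (4 * pi * (1 - (real_of_int n)^2))"
  unfolding fourier_term_def norm_fourier_coeff_sq by (simp add: power2_eq_square)

lemma fourier_term_0: "fourier_term 0 = total_mass^2 / (4 * pi)"
  by (simp add: fourier_term_eq cos_moment_0 sin_moment_0 power2_eq_square)

lemma fourier_term_plus_two:
  "fourier_term (int m + 2)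
     = - 1 / (4 * pi) * ((cos_moment (real (m + 2))^2 + sin_moment (real (m + 2))^2) / sq_minus_one m)"
proof -
  have "1 - (real m + 2)^2 = - sq_minus_one m"
    by (simp add: sq_minus_one_eq)
  then show ?thesis
    unfolding fourier_term_eq by (simp add: add.commute)
qed

lemma fourier_term_uminus: "fourier_term (- n) = fourier_term n"
  unfolding fourier_term_eq of_int_minus cos_moment_uminus sin_moment_uminus power2_minus ..

lemma integral_cos_mult_diff:
  "(\<integral>\<alpha>. cos (k * (\<theta> - \<alpha>)) \<partial>\<mu>) = cos (k * \<theta>) * cos_moment k + sin (k * \<theta>) * sin_moment k"
proof -
  have "(\<integral>\<alpha>. cos (k * (\<theta> - \<alpha>)) \<partial>\<mu>)
      = (\<integral>\<alpha>. cos (k * \<theta>) * cos (k * \<alpha>) + sin (k * \<theta>) * sin (k * \<alpha>) \<partial>\<mu>)"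
    by (simp add: right_diff_distrib cos_diff)
  also have "\<dots> = cos (k * \<theta>) * cos_moment k + sin (k * \<theta>) * sin_moment k"
    unfolding cos_moment_def sin_moment_def
    by (subst Bochner_Integration.integral_add) (auto intro!: integrable_continuous continuous_intros)
  finally show ?thesis .
qed

end

locale centred_circle_measure = circle_measure +
  assumes first_moment_zero: "(\<integral>\<theta>. exp (\<i> * of_real \<theta>) \<partial>\<mu>) = 0"
begin

lemma cos_moment_1: "cos_moment 1 = 0"
  and sin_moment_1: "sin_moment 1 = 0"
  using first_moment_zero integral_cis_mult[of 1] by (simp_all add: cis_conv_exp complex_eq_iff)

lemma integral_linear_sin_diff:
  "(\<integral>\<alpha>. (\<theta> - \<alpha>) * sin (\<theta> - \<alpha>) \<partial>\<mu>)
     = cos \<theta> * (\<integral>\<alpha>. \<alpha> * sin \<alpha> \<partial>\<mu>) - sin \<theta> * (\<integral>\<alpha>. \<alpha> * cos \<alpha> \<partial>\<mu>)"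
proof -
  have integrable: "integrable \<mu> (\<lambda>\<alpha>. cos \<alpha>)" "integrable \<mu> (\<lambda>\<alpha>. sin \<alpha>)"
    "integrable \<mu> (\<lambda>\<alpha>. \<alpha> * cos \<alpha>)" "integrable \<mu> (\<lambda>\<alpha>. \<alpha> * sin \<alpha>)"
    by (intro integrable_continuous continuous_intros)+
  have "(\<integral>\<alpha>. (\<theta> - \<alpha>) * sin (\<theta> - \<alpha>) \<partial>\<mu>)
      = (\<integral>\<alpha>. \<theta> * sin \<theta> * cos \<alpha> - \<theta> * cos \<theta> * sin \<alpha>
              - (sin \<theta> * (\<alpha> * cos \<alpha>) - cos \<theta> * (\<alpha> * sin \<alpha>)) \<partial>\<mu>)"
    by (simp add: sin_diff algebra_simps)
  also have "\<dots> = \<theta> * sin \<theta> * cos_moment 1 - \<theta> * cos \<theta> * sin_moment 1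
      - (sin \<theta> * (\<integral>\<alpha>. \<alpha> * cos \<alpha> \<partial>\<mu>) - cos \<theta> * (\<integral>\<alpha>. \<alpha> * sin \<alpha> \<partial>\<mu>))"
    using integrable by (simp add: cos_moment_def sin_moment_def)
  finally show ?thesis
    by (simp add: cos_moment_1 sin_moment_1)
qed

lemma integral_sin_abs_diff:
  assumes "\<theta> \<in> S1"
  shows "(\<integral>\<alpha>. sin \<bar>\<theta> - \<alpha>\<bar> \<partial>\<mu>) = total_mass / pi - (2/pi) * mode_series \<theta>
    + (cos \<theta> * (\<integral>\<alpha>. \<alpha> * sin \<alpha> \<partial>\<mu>) - sin \<theta> * (\<integral>\<alpha>. \<alpha> * cos \<alpha> \<partial>\<mu>)) / pi"
proof -
  define g where "g m \<alpha> = cos (real (m + 2) * (\<theta> - \<alpha>)) / sq_minus_one m" for m \<alpha>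
  have g_meas: "g m \<in> borel_measurable borel" for m
    unfolding g_def by (intro borel_measurable_continuous_onI continuous_intros) simp
  have g_bound: "\<bar>g m \<alpha>\<bar> \<le> 1 / sq_minus_one m" for m \<alpha>
    using sq_minus_one_pos[of m] by (simp add: g_def abs_div divide_right_mono)
  note g_summable = summable_div_sq_minus_one[of 1]
  have "(\<lambda>m. \<integral>\<alpha>. g m \<alpha> \<partial>\<mu>) sums (\<integral>\<alpha>. (\<Sum>m. g m \<alpha>) \<partial>\<mu>)"
    by (rule sums_integral_bounded[OF g_meas g_bound g_summable])
  then have series_eq: "(\<integral>\<alpha>. (\<Sum>m. g m \<alpha>) \<partial>\<mu>) = mode_series \<theta>"
    unfolding g_def integral_divide_zero integral_cos_mult_diff mode_series_def by (simp add: sums_iff)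
  have "(\<integral>\<alpha>. sin \<bar>\<theta> - \<alpha>\<bar> \<partial>\<mu>) = (\<integral>\<alpha>. 1/pi - (2/pi) * (\<Sum>m. g m \<alpha>)
      + cos (\<theta> - \<alpha>) / (2*pi) + (\<theta> - \<alpha>) * sin (\<theta> - \<alpha>) / pi \<partial>\<mu>)"
  proof (rule Bochner_Integration.integral_cong[OF refl])
    fix \<alpha>
    assume "\<alpha> \<in> space \<mu>"
    with assms have "\<bar>\<theta> - \<alpha>\<bar> \<le> 2 * pi"
      by (auto simp: space_circle S1_def)
    from sin_abs_eq_cos_series[OF this] show "sin \<bar>\<theta> - \<alpha>\<bar> = 1/pi - (2/pi) * (\<Sum>m. g m \<alpha>)
        + cos (\<theta> - \<alpha>) / (2*pi) + (\<theta> - \<alpha>) * sin (\<theta> - \<alpha>) / pi"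
      by (simp add: g_def)
  qed
  also have "\<dots> = total_mass / pi - (2/pi) * (\<integral>\<alpha>. (\<Sum>m. g m \<alpha>) \<partial>\<mu>)
      + (\<integral>\<alpha>. cos (\<theta> - \<alpha>) \<partial>\<mu>) / (2*pi) + (\<integral>\<alpha>. (\<theta> - \<alpha>) * sin (\<theta> - \<alpha>) \<partial>\<mu>) / pi"
  proof -
    have "integrable \<mu> (\<lambda>\<alpha>. cos (\<theta> - \<alpha>))" "integrable \<mu> (\<lambda>\<alpha>. (\<theta> - \<alpha>) * sin (\<theta> - \<alpha>))"
      by (intro integrable_continuous continuous_intros)+
    with integrable_suminf_bounded[OF g_meas g_bound g_summable] show ?thesis
      by (simp add: space_circle)
  qed
  also have "(\<integral>\<alpha>. cos (\<theta> - \<alpha>) \<partial>\<mu>) = 0"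
    using integral_cos_mult_diff[of 1 \<theta>] by (simp add: cos_moment_1 sin_moment_1)
  finally show ?thesis
    unfolding series_eq integral_linear_sin_diff by simp
qed

lemma has_sum_moments_sq_div_sq_minus_one:
  "((\<lambda>m. (cos_moment (real (m + 2))^2 + sin_moment (real (m + 2))^2) / sq_minus_one m)
     has_sum ((total_mass^2 - pi * (\<integral>\<theta>. (\<integral>\<alpha>. sin \<bar>\<theta> - \<alpha>\<bar> \<partial>\<mu>) \<partial>\<mu>)) / 2)) UNIV"
proof -
  have "(\<integral>\<theta>. (\<integral>\<alpha>. sin \<bar>\<theta> - \<alpha>\<bar> \<partial>\<mu>) \<partial>\<mu>) = (\<integral>\<theta>. total_mass / pi - (2/pi) * mode_series \<theta>
      + (cos \<theta> * (\<integral>\<alpha>. \<alpha> * sin \<alpha> \<partial>\<mu>) - sin \<theta> * (\<integral>\<alpha>. \<alpha> * cos \<alpha> \<partial>\<mu>)) / pi \<partial>\<mu>)"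
    by (rule Bochner_Integration.integral_cong[OF refl]) (simp add: integral_sin_abs_diff space_circle)
  also have "\<dots> = total_mass^2 / pi - (2/pi) * (\<integral>\<theta>. mode_series \<theta> \<partial>\<mu>)
      + (cos_moment 1 * (\<integral>\<alpha>. \<alpha> * sin \<alpha> \<partial>\<mu>) - sin_moment 1 * (\<integral>\<alpha>. \<alpha> * cos \<alpha> \<partial>\<mu>)) / pi"
  proof -
    have "integrable \<mu> (\<lambda>\<theta>. cos \<theta>)" "integrable \<mu> (\<lambda>\<theta>. sin \<theta>)"
      by (intro integrable_continuous continuous_intros)+
    with integrable_mode_series show ?thesis
      by (simp add: space_circle cos_moment_def sin_moment_def power2_eq_square)
  qed
  finally have "(\<integral>\<theta>. mode_series \<theta> \<partial>\<mu>)
      = (total_mass^2 - pi * (\<integral>\<theta>. (\<integral>\<alpha>. sin \<bar>\<theta> - \<alpha>\<bar> \<partial>\<mu>) \<partial>\<mu>)) / 2"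
    by (simp add: cos_moment_1 sin_moment_1 field_simps)
  with sums_integral_mode_series show ?thesis
    using sq_minus_one_pos by (intro sums_nonneg_imp_has_sum) (simp_all add: less_imp_le)
qed

end

lemma has_sum_int_except_plus_minus_one:
  fixes f :: "int \<Rightarrow> 'a::topological_comm_monoid_add"
  assumes "((\<lambda>m. f (int m + 2)) has_sum s) UNIV" and "((\<lambda>m. f (- int m - 2)) has_sum t) UNIV"
  shows "(f has_sum (f 0 + (s + t))) {n. n \<noteq> 1 \<and> n \<noteq> -1}"
proof -
  have pos: "bij_betw (\<lambda>m. int m + 2) UNIV {2..}"
    by (rule bij_betwI[where g = "\<lambda>n. nat (n - 2)"]) auto
  have neg: "bij_betw (\<lambda>m. - int m - 2) UNIV {..-2}"
    by (rule bij_betwI[where g = "\<lambda>n. nat (- n - 2)"]) auto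
  from assms(1) have "(f has_sum s) {2..}"
    unfolding has_sum_reindex_bij_betw[OF pos, symmetric] .
  moreover from assms(2) have "(f has_sum t) {..-2}"
    unfolding has_sum_reindex_bij_betw[OF neg, symmetric] .
  ultimately have "(f has_sum (s + t)) ({2..} \<union> {..-2})"
    by (rule has_sum_Un_disjoint) auto
  then have "(f has_sum (f 0 + (s + t))) (insert 0 ({2..} \<union> {..-2}))"
    by (intro has_sum_insert) auto
  moreover have "insert 0 ({2..} \<union> {..-2}) = {n::int. n \<noteq> 1 \<and> n \<noteq> -1}"
    by auto
  ultimately show ?thesis
    by simp
qed

theorem proposition4p5:
  fixes \<mu> :: "real measure"
  assumes "\<mu> \<in> M0plus"
  shows "((\<lambda>n::int. pi * (cmod (fourier_coeff \<mu> n))^2 / (1 - (real_of_int n)^2))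
           has_sum ((1/4) * (\<integral>\<theta>. (\<integral>\<alpha>. sin \<bar>\<theta> - \<alpha>\<bar> \<partial>\<mu>) \<partial>\<mu>)))
         {n. n \<noteq> 1 \<and> n \<noteq> -1}"
proof -
  interpret centred_circle_measure \<mu>
    using assms by (simp add: M0plus_def centred_circle_measure_def centred_circle_measure_axioms_def
        circle_measure_def circle_measure_axioms_def)
  define I where "I = (\<integral>\<theta>. (\<integral>\<alpha>. sin \<bar>\<theta> - \<alpha>\<bar> \<partial>\<mu>) \<partial>\<mu>)"
  define s where "s = - 1 / (4 * pi) * ((total_mass^2 - pi * I) / 2)"
  have "((\<lambda>m. fourier_term (int m + 2)) has_sum s) UNIV"
    unfolding fourier_term_plus_two s_def I_def
    by (rule has_sum_cmult_right[OF has_sum_moments_sq_div_sq_minus_one])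
  moreover have "fourier_term (- int m - 2) = fourier_term (int m + 2)" for m
    using fourier_term_uminus[of "int m + 2"] by simp
  ultimately have "(fourier_term has_sum (fourier_term 0 + (s + s))) {n. n \<noteq> 1 \<and> n \<noteq> -1}"
    by (intro has_sum_int_except_plus_minus_one) simp_all
  also have "fourier_term 0 + (s + s) = (1/4) * I"
    by (simp add: fourier_term_0 s_def field_simps)
  finally show ?thesis
    unfolding fourier_term_def[abs_def] I_def .
qed

end
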